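(* There is an absolute constant $C$ such that for every $r\ge2$ and every graphic matroid $M$ of rank $r$ on ground set $[n]$ (for any $n$), $R^{lin}_{1/3}(rank_M)\le C r^2\log r$.
   Context: A graphic matroid $M(G)$ of a (multi)graph $G$ whose edges are identified with $[n]$ has as independent sets exactly the edge sets forming forests; its rank function is $rank_M(S)=\max\{|I|: I\subseteq S, I \text{ independent}\}$, viewed as a function on $\mathbb F_2^n$ by identifying $x$ with $\{i:x_i=1\}$; its rank is $rank_M([n])$. For $S\subseteq[n]$, $\chi_S(x)=\sum_{i\in S}x_i\pmod2$. Exact randomized $\mathbb F_2$-sketch complexity: for $f\colon\mathbb F_2^n\to\mathbb R$ and $\delta\in[0,1]$, $R^{lin}_\delta(f)$ is the smallest integer $k$ such that there exists a probability distribution over $k$-tuples of subsets $\mathbf S_1,\dots,\mathbf S_k\subseteq[n]$ and a function $g\colon\mathbb F_2^k\to\mathbb R$ with $\Pr_{\mathbf S_1,\dots,\mathbf S_k}[g(\chi_{\mathbf S_1}(x),\dots,\chi_{\mathbf S_k}(x))=f(x)]\ge1-\delta$ for every $x\in\mathbb F_2^n$. *)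

theory Defs
  imports "HOL-Probability.Probability"
begin

text \<open>A multigraph with edges identified with [n] = {0..<n}: edge i has endpoints G i
  (an unordered pair represented by an ordered pair; loops allowed, parallel edges allowed).\<close>

type_synonym multigraph = "nat \<Rightarrow> nat \<times> nat"

definition edge_joins :: "multigraph \<Rightarrow> nat \<Rightarrow> nat \<Rightarrow> nat \<Rightarrow> bool" where
  "edge_joins G i u v \<longleftrightarrow> G i = (u, v) \<or> G i = (v, u)"

definition has_cycle :: "multigraph \<Rightarrow> nat set \<Rightarrow> bool" where
  "has_cycle G S \<longleftrightarrow> (\<exists>es vs. es \<noteq> [] \<and> length vs = length es \<and> distinct es \<and> distinct vs
      \<and> set es \<subseteq> S
      \<and> (\<forall>j < length es. edge_joins G (es ! j) (vs ! j) (vs ! ((j + 1) mod length es))))"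

definition graphic_indep :: "nat \<Rightarrow> multigraph \<Rightarrow> nat set \<Rightarrow> bool" where
  "graphic_indep n G I \<longleftrightarrow> I \<subseteq> {0..<n} \<and> \<not> has_cycle G I"

text \<open>Rank function of M(G), viewed on F_2^n by identifying x with {i. x_i = 1}.\<close>
definition graphic_rank :: "nat \<Rightarrow> multigraph \<Rightarrow> nat set \<Rightarrow> nat" where
  "graphic_rank n G S = Max {card I | I. I \<subseteq> S \<and> graphic_indep n G I}"

definition matroid_rank :: "nat \<Rightarrow> multigraph \<Rightarrow> nat" where
  "matroid_rank n G = graphic_rank n G {0..<n}"

text \<open>chi_S(x) for x \<in> F_2^n given as the set X of coordinates equal to 1 (True = 1).\<close>
definition chi :: "nat set \<Rightarrow> nat set \<Rightarrow> bool" where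
  "chi S X = odd (card (S \<inter> X))"

text \<open>A randomized F_2-sketch of size k for f: a distribution D over k-tuples (lists of
  length k) of subsets of [n] and a decoder g : F_2^k \<rightarrow> R, correct with probability
  \<ge> 1 - \<delta> on every input x \<in> F_2^n.\<close>
definition sketch_exists :: "nat \<Rightarrow> (nat set \<Rightarrow> real) \<Rightarrow> real \<Rightarrow> nat \<Rightarrow> bool" where
  "sketch_exists n f \<delta> k \<longleftrightarrow> (\<exists>(D :: nat set list pmf) (g :: bool list \<Rightarrow> real).
      (\<forall>Ss \<in> set_pmf D. length Ss = k \<and> (\<forall>S \<in> set Ss. S \<subseteq> {0..<n}))
      \<and> (\<forall>X. X \<subseteq> {0..<n} \<longrightarrow>
           measure_pmf.prob D {Ss. g (map (\<lambda>S. chi S X) Ss) = f X} \<ge> 1 - \<delta>))"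

definition R_lin :: "nat \<Rightarrow> (nat set \<Rightarrow> real) \<Rightarrow> real \<Rightarrow> nat" where
  "R_lin n f \<delta> = (LEAST k. sketch_exists n f \<delta> k)"

end

theory Submission
  imports Defs
begin

text \<open>Parallel edges form a cycle, so the rank of an edge set depends only on which
  endpoint pairs (keys) its non-loop edges realise. Every non-loop edge has both endpoints
  among the at most 2r vertices of a spanning forest, so there are at most 4r^2 keys. For each
  key, t independent parities of uniformly random subsets of its edge class reveal whether X
  meets that class, except with probability 2^-t; a union bound over the keys with
  2^t \<ge> 12 r^2 gives error at most 1/3 with 4r^2 t = O(r^2 log r) parities.\<close>

section \<open>The graphic rank depends only on the edge keys\<close>

definition is_loop :: "multigraph \<Rightarrow> nat \<Rightarrow> bool" where
  "is_loop G i \<longleftrightarrow> fst (G i) = snd (G i)"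

definition proper_edges :: "nat \<Rightarrow> multigraph \<Rightarrow> nat set" where
  "proper_edges n G = {i. i < n \<and> \<not> is_loop G i}"

definition edge_key :: "multigraph \<Rightarrow> nat \<Rightarrow> nat \<times> nat" where
  "edge_key G i = (min (fst (G i)) (snd (G i)), max (fst (G i)) (snd (G i)))"

lemma has_cycle_mono: "has_cycle G S \<Longrightarrow> S \<subseteq> T \<Longrightarrow> has_cycle G T"
  unfolding has_cycle_def by blast

lemma has_cycle_loop: "is_loop G i \<Longrightarrow> has_cycle G {i}"
  unfolding has_cycle_def is_loop_def edge_joins_def
  by (rule exI[of _ "[i]"], rule exI[of _ "[fst (G i)]"]) (cases "G i", auto)

lemma edge_joins_cong_key:
  assumes "edge_key G i = edge_key G i'"
  shows "edge_joins G i u v \<longleftrightarrow> edge_joins G i' u v"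
  using assms unfolding edge_key_def edge_joins_def
  by (cases "G i"; cases "G i'") (auto simp: min_def max_def split: if_splits)

lemma has_cycle_parallel:
  assumes "i \<noteq> i'" and "edge_key G i = edge_key G i'"
  shows "has_cycle G {i, i'}"
proof (cases "is_loop G i")
  case True
  then show ?thesis using has_cycle_loop has_cycle_mono by blast
next
  case False
  obtain a b where ab: "G i = (a, b)" by (cases "G i")
  with False have "a \<noteq> b" by (simp add: is_loop_def)
  have "edge_joins G i a b" "edge_joins G i' b a"
    using ab edge_joins_cong_key[OF assms(2)] by (auto simp: edge_joins_def)
  then show ?thesis unfolding has_cycle_def
    by (intro exI[of _ "[i, i']"] exI[of _ "[a, b]"])
       (use assms(1) \<open>a \<noteq> b\<close> in \<open>auto simp: less_Suc_eq\<close>)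
qed

lemma has_cycle_key_preimage:
  assumes inj: "inj_on \<phi> I" and key: "\<And>i. i \<in> I \<Longrightarrow> edge_key G (\<phi> i) = edge_key G i"
    and cyc: "has_cycle G (\<phi> ` I)"
  shows "has_cycle G I"
proof -
  obtain es vs where c: "es \<noteq> []" "length vs = length es" "distinct es" "distinct vs"
    "set es \<subseteq> \<phi> ` I" "\<forall>j < length es. edge_joins G (es ! j) (vs ! j) (vs ! ((j + 1) mod length es))"
    using cyc unfolding has_cycle_def by blast
  have key_inv: "edge_key G (inv_into I \<phi> e) = edge_key G e" if "e \<in> \<phi> ` I" for e
    using key[OF inv_into_into[OF that]] f_inv_into_f[OF that] by simp
  show ?thesis unfolding has_cycle_def
  proof (rule exI[of _ "map (inv_into I \<phi>) es"], rule exI[of _ vs], intro conjI allI impI)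
    show "distinct (map (inv_into I \<phi>) es)"
      using c(3,5) by (simp add: distinct_map inj_on_inv_into)
    show "set (map (inv_into I \<phi>) es) \<subseteq> I" using c(5) by (auto intro: inv_into_into)
    fix j assume j: "j < length (map (inv_into I \<phi>) es)"
    then have "es ! j \<in> \<phi> ` I" using c(5) nth_mem by auto
    then show "edge_joins G (map (inv_into I \<phi>) es ! j) (vs ! j)
        (vs ! ((j + 1) mod length (map (inv_into I \<phi>) es)))"
      using j c(6) edge_joins_cong_key[OF key_inv] by auto
  qed (use c in auto)
qed

lemma finite_graphic_rank_candidates: "finite {card I | I. I \<subseteq> S \<and> graphic_indep n G I}"
proof -
  have "{card I | I. I \<subseteq> S \<and> graphic_indep n G I} \<subseteq> card ` Pow {0..<n}"
    by (auto simp: graphic_indep_def)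
  then show ?thesis using finite_surj by blast
qed

lemma graphic_rank_attained: "\<exists>I \<subseteq> S. graphic_indep n G I \<and> card I = graphic_rank n G S"
proof -
  have "card {} \<in> {card I | I. I \<subseteq> S \<and> graphic_indep n G I}"
    by (auto simp: graphic_indep_def has_cycle_def intro!: exI[of _ "{}"])
  then have "graphic_rank n G S \<in> {card I | I. I \<subseteq> S \<and> graphic_indep n G I}"
    unfolding graphic_rank_def using finite_graphic_rank_candidates by (intro Max_in) auto
  then show ?thesis by auto
qed

lemma card_le_graphic_rank:
  assumes "I \<subseteq> S" and "graphic_indep n G I"
  shows "card I \<le> graphic_rank n G S"
  unfolding graphic_rank_def using assms finite_graphic_rank_candidates by (intro Max_ge) auto

lemma graphic_indep_not_loop: "graphic_indep n G I \<Longrightarrow> i \<in> I \<Longrightarrow> \<not> is_loop G i"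
  using has_cycle_loop has_cycle_mono unfolding graphic_indep_def by blast

lemma graphic_rank_mono_keys:
  assumes Y: "Y \<subseteq> {0..<n}" and keys: "edge_key G ` (X \<inter> proper_edges n G) \<subseteq> edge_key G ` Y"
  shows "graphic_rank n G X \<le> graphic_rank n G Y"
proof -
  obtain I where I: "I \<subseteq> X" "graphic_indep n G I" "card I = graphic_rank n G X"
    using graphic_rank_attained by blast
  have "I \<subseteq> proper_edges n G"
    using I(2) graphic_indep_not_loop by (auto simp: proper_edges_def graphic_indep_def)
  then have "\<forall>i \<in> I. \<exists>i' \<in> Y. edge_key G i' = edge_key G i"
    using keys I(1) by (metis IntI image_eqI imageE in_mono)
  then obtain \<phi> where \<phi>: "\<And>i. i \<in> I \<Longrightarrow> \<phi> i \<in> Y \<and> edge_key G (\<phi> i) = edge_key G i"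
    by metis
  have acyclic: "\<not> has_cycle G I" using I(2) by (simp add: graphic_indep_def)
  have inj: "inj_on \<phi> I"
  proof (rule inj_onI, rule ccontr)
    fix i i' assume ii: "i \<in> I" "i' \<in> I" "\<phi> i = \<phi> i'" "i \<noteq> i'"
    have "edge_key G i = edge_key G i'" using \<phi>[OF ii(1)] \<phi>[OF ii(2)] ii(3) by simp
    then have "has_cycle G {i, i'}" using ii(4) by (intro has_cycle_parallel)
    moreover have "{i, i'} \<subseteq> I" using ii by auto
    ultimately show False using has_cycle_mono acyclic by blast
  qed
  have "graphic_indep n G (\<phi> ` I)"
    using \<phi> Y acyclic has_cycle_key_preimage[OF inj] by (auto simp: graphic_indep_def)
  then have "card (\<phi> ` I) \<le> graphic_rank n G Y"
    using \<phi> by (intro card_le_graphic_rank) auto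
  then show ?thesis using I(3) card_image[OF inj] by simp
qed

lemma graphic_rank_eq_if_same_keys:
  assumes "X \<subseteq> {0..<n}" "Y \<subseteq> {0..<n}"
    and "edge_key G ` (X \<inter> proper_edges n G) = edge_key G ` (Y \<inter> proper_edges n G)"
  shows "graphic_rank n G X = graphic_rank n G Y"
proof (rule antisym)
  show "graphic_rank n G X \<le> graphic_rank n G Y"
    by (rule graphic_rank_mono_keys[OF assms(2)]) (use assms(3) in auto)
  show "graphic_rank n G Y \<le> graphic_rank n G X"
    by (rule graphic_rank_mono_keys[OF assms(1)]) (use assms(3) in auto)
qed

definition edge_vertices :: "multigraph \<Rightarrow> nat set \<Rightarrow> nat set" where
  "edge_vertices G F = (\<Union>f \<in> F. {fst (G f), snd (G f)})"

lemma cycle_vertex_in_two_edges: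
  assumes cyc: "distinct es" "length vs = length es"
      "\<forall>j < length es. edge_joins G (es ! j) (vs ! j) (vs ! ((j + 1) mod length es))"
    and len: "2 \<le> length es" and q: "q < length es"
  shows "\<exists>e \<in> set es. \<exists>e' \<in> set es. e \<noteq> e'
           \<and> vs ! q \<in> {fst (G e), snd (G e)} \<and> vs ! q \<in> {fst (G e'), snd (G e')}"
proof -
  define k where "k = length es"
  define q' where "q' = (if q = 0 then k - 1 else q - 1)"
  have q': "q' < k" "q' \<noteq> q" "(q' + 1) mod k = q" using q len by (auto simp: q'_def k_def)
  have "es ! q \<noteq> es ! q'" using cyc(1) q q' by (simp add: nth_eq_iff_index_eq k_def)
  moreover have "edge_joins G (es ! q) (vs ! q) (vs ! ((q + 1) mod k))"
    using cyc(3) q by (simp add: k_def)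
  moreover have "edge_joins G (es ! q') (vs ! q') (vs ! q)"
    using cyc(3)[rule_format, of q'] q'(1,3) unfolding k_def by simp
  ultimately have "vs ! q \<in> {fst (G (es ! q)), snd (G (es ! q))}"
    "vs ! q \<in> {fst (G (es ! q')), snd (G (es ! q'))}" "es ! q \<noteq> es ! q'"
    by (auto simp: edge_joins_def)
  moreover have "es ! q \<in> set es" "es ! q' \<in> set es" using q q'(1) by (auto simp: k_def)
  ultimately show ?thesis by blast
qed

lemma endpoints_in_vertices_of_forest:
  assumes cyc: "has_cycle G (insert i F)" and acyclic: "\<not> has_cycle G F" and proper: "\<not> is_loop G i"
  shows "fst (G i) \<in> edge_vertices G F \<and> snd (G i) \<in> edge_vertices G F"
proof -
  obtain es vs where c: "es \<noteq> []" "length vs = length es" "distinct es" "distinct vs"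
    "set es \<subseteq> insert i F" "\<forall>j < length es. edge_joins G (es ! j) (vs ! j) (vs ! ((j + 1) mod length es))"
    using cyc unfolding has_cycle_def by blast
  have "i \<in> set es"
  proof (rule ccontr)
    assume "i \<notin> set es"
    then have "set es \<subseteq> F" using c(5) by auto
    then show False using c acyclic unfolding has_cycle_def by blast
  qed
  then obtain p where p: "p < length es" "es ! p = i" by (auto simp: in_set_conv_nth)
  have "length es \<noteq> 1"
  proof
    assume "length es = 1"
    then have "edge_joins G i (vs ! 0) (vs ! 0)" using c(6) p by auto
    then show False using proper by (auto simp: edge_joins_def is_loop_def)
  qed
  then have len: "2 \<le> length es" using c(1) by (cases "length es") auto
  have in_F: "vs ! q \<in> edge_vertices G F" if "q < length es" for q
    using cycle_vertex_in_two_edges[OF c(3,2,6) len that] c(5) unfolding edge_vertices_def by blast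
  have "edge_joins G i (vs ! p) (vs ! ((p + 1) mod length es))"
    using c(6)[rule_format, OF p(1)] p(2) by simp
  then show ?thesis using in_F p(1) c(1) by (auto simp: edge_joins_def)
qed

lemma endpoints_in_vertices_of_max_forest:
  assumes F: "F \<subseteq> {0..<n}" "graphic_indep n G F" "card F = matroid_rank n G"
    and i: "i \<in> proper_edges n G"
  shows "fst (G i) \<in> edge_vertices G F \<and> snd (G i) \<in> edge_vertices G F"
proof (cases "i \<in> F")
  case False
  have finF: "finite F" using F(1) finite_subset by blast
  have "\<not> graphic_indep n G (insert i F)"
  proof
    assume "graphic_indep n G (insert i F)"
    then have "card (insert i F) \<le> matroid_rank n G"
      unfolding matroid_rank_def using F(1) i by (intro card_le_graphic_rank) (auto simp: proper_edges_def)
    then show False using F(3) False finF by simp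
  qed
  then have "has_cycle G (insert i F)" using F(1) i by (auto simp: graphic_indep_def proper_edges_def)
  moreover have "\<not> has_cycle G F" using F(2) by (simp add: graphic_indep_def)
  moreover have "\<not> is_loop G i" using i by (simp add: proper_edges_def)
  ultimately show ?thesis by (rule endpoints_in_vertices_of_forest)
qed (auto simp: edge_vertices_def)

lemma card_edge_keys_le: "card (edge_key G ` proper_edges n G) \<le> 4 * matroid_rank n G ^ 2"
proof -
  define r where "r = matroid_rank n G"
  obtain F where F: "F \<subseteq> {0..<n}" "graphic_indep n G F" "card F = r"
    using graphic_rank_attained[of "{0..<n}" n G] by (auto simp: matroid_rank_def r_def)
  define V where "V = edge_vertices G F"
  have finF: "finite F" using F(1) finite_subset by blast
  then have finV: "finite V" by (simp add: V_def edge_vertices_def)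
  have "card V \<le> (\<Sum>f \<in> F. card {fst (G f), snd (G f)})"
    unfolding V_def edge_vertices_def by (rule card_UN_le[OF finF])
  also have "\<dots> \<le> (\<Sum>f \<in> F. 2)" by (intro sum_mono) (simp add: card_insert_le_m1)
  finally have card_V: "card V \<le> 2 * r" using F(3) by simp
  have "edge_key G ` proper_edges n G \<subseteq> V \<times> V"
    using endpoints_in_vertices_of_max_forest[OF F[unfolded r_def]]
    by (auto simp: V_def edge_key_def min_def max_def)
  then have "card (edge_key G ` proper_edges n G) \<le> card V * card V"
    using finV card_mono[of "V \<times> V"] by (simp add: card_cartesian_product)
  also have "\<dots> \<le> 4 * r ^ 2" using mult_mono[OF card_V card_V] by (simp add: power2_eq_square)
  finally show ?thesis by (simp add: r_def)
qed

section \<open>Sketching functions of the hit pattern\<close>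

lemma card_even_inter_Pow:
  assumes C: "finite C" and a: "a \<in> C" "a \<in> X"
  shows "2 * card {T \<in> Pow C. even (card (T \<inter> X))} = 2 ^ card C"
proof -
  define toggle where "toggle T = (if a \<in> T then T - {a} else insert a T)" for T
  have finite_inter: "finite (T \<inter> X)" if "T \<in> Pow C" for T
    using C that by (auto intro: finite_subset)
  have parity_flip: "even (card (toggle T \<inter> X)) \<longleftrightarrow> odd (card (T \<inter> X))" if "T \<in> Pow C" for T
  proof (cases "a \<in> T")
    case True
    then have "toggle T \<inter> X = (T \<inter> X) - {a}" "a \<in> T \<inter> X" using a by (auto simp: toggle_def)
    then show ?thesis using finite_inter[OF that] by (auto simp: card_Diff_singleton card_gt_0_iff)
  next
    case False
    then have "toggle T \<inter> X = insert a (T \<inter> X)" using a by (auto simp: toggle_def)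
    then show ?thesis using False finite_inter[OF that] by simp
  qed
  define E where "E = {T \<in> Pow C. even (card (T \<inter> X))}"
  have toggle_Pow: "toggle T \<in> Pow C" if "T \<in> Pow C" for T
    using that a by (auto simp: toggle_def)
  have "toggle (toggle T) = T" for T by (auto simp: toggle_def)
  then have "bij_betw toggle E (Pow C - E)"
    by (intro bij_betw_byWitness[where f' = toggle]) (use toggle_Pow parity_flip in \<open>auto simp: E_def\<close>)
  then have "card E = card (Pow C - E)" by (rule bij_betw_same_card)
  moreover have "card (Pow C - E) = card (Pow C) - card E"
    using C by (intro card_Diff_subset) (auto simp: E_def)
  moreover have "card E \<le> card (Pow C)" using C by (intro card_mono) (auto simp: E_def)
  ultimately show ?thesis using C by (simp add: card_Pow E_def)
qed

lemma prob_even_inter_random_subset: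
  assumes "finite C" and "C \<inter> X \<noteq> {}"
  shows "measure_pmf.prob (pmf_of_set (Pow C)) {T. \<not> chi T X} = 1/2"
proof -
  obtain a where a: "a \<in> C" "a \<in> X" using assms(2) by auto
  have "measure_pmf.prob (pmf_of_set (Pow C)) {T. \<not> chi T X}
        = card {T \<in> Pow C. even (card (T \<inter> X))} / card (Pow C)"
    using assms(1) by (subst measure_pmf_of_set) (auto simp: chi_def Int_def)
  also have "\<dots> = 1/2"
  proof -
    have "real (2 * card {T \<in> Pow C. even (card (T \<inter> X))}) = real (2 ^ card C)"
      using card_even_inter_Pow[OF assms(1) a] by (simp only:)
    then show ?thesis using assms(1) by (simp add: card_Pow field_simps)
  qed
  finally show ?thesis .
qed

lemma prob_Pi_pmf_forall:
  assumes "finite I" and "J \<subseteq> I"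
  shows "measure_pmf.prob (Pi_pmf I d p) {F. \<forall>x \<in> J. F x \<in> B x}
           = (\<Prod>x \<in> J. measure_pmf.prob (p x) (B x))"
proof -
  have "{F. \<forall>x \<in> J. F x \<in> B x} = Pi I (\<lambda>x. if x \<in> J then B x else UNIV)"
    using assms(2) by (auto simp: Pi_def)
  then have "measure_pmf.prob (Pi_pmf I d p) {F. \<forall>x \<in> J. F x \<in> B x}
           = (\<Prod>x \<in> I. measure_pmf.prob (p x) (if x \<in> J then B x else UNIV))"
    using measure_Pi_pmf_Pi[OF assms(1)] by simp
  also have "\<dots> = (\<Prod>x \<in> J. measure_pmf.prob (p x) (B x))"
    using assms by (intro prod.mono_neutral_cong_right) auto
  finally show ?thesis .
qed

definition parity_sampler :: "(nat \<Rightarrow> 'k) \<Rightarrow> nat set \<Rightarrow> nat \<Rightarrow> ('k \<times> nat \<Rightarrow> nat set) pmf" where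
  "parity_sampler \<kappa> A t =
     Pi_pmf (\<kappa> ` A \<times> {0..<t}) {} (\<lambda>x. pmf_of_set (Pow {i \<in> A. \<kappa> i = fst x}))"

definition parity_misses ::
    "(nat \<Rightarrow> 'k) \<Rightarrow> nat set \<Rightarrow> nat \<Rightarrow> nat set \<Rightarrow> ('k \<times> nat \<Rightarrow> nat set) set" where
  "parity_misses \<kappa> A t X = {F. \<exists>k \<in> \<kappa> ` (X \<inter> A). \<forall>s < t. \<not> chi (F (k, s)) X}"

lemma parity_sampler_subset:
  assumes "finite A" "F \<in> set_pmf (parity_sampler \<kappa> A t)" "k \<in> \<kappa> ` A" "s < t"
  shows "F (k, s) \<subseteq> {i \<in> A. \<kappa> i = k}"
proof -
  have "F (k, s) \<in> set_pmf (pmf_of_set (Pow {i \<in> A. \<kappa> i = k}))"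
    using assms by (auto simp: parity_sampler_def set_Pi_pmf PiE_dflt_def)
  then show ?thesis using assms(1) by (subst (asm) set_pmf_of_set) auto
qed

lemma prob_parity_misses:
  assumes "finite A"
  shows "measure_pmf.prob (parity_sampler \<kappa> A t) (parity_misses \<kappa> A t X) \<le> card (\<kappa> ` A) / 2 ^ t"
proof -
  let ?P = "parity_sampler \<kappa> A t"
  let ?miss = "\<lambda>k. {F. \<forall>s < t. \<not> chi (F (k, s)) X}"
  have miss: "measure_pmf.prob ?P (?miss k) = (1/2) ^ t" if k: "k \<in> \<kappa> ` (X \<inter> A)" for k
  proof -
    have "measure_pmf.prob ?P (?miss k)
        = measure_pmf.prob ?P {F. \<forall>x \<in> {k} \<times> {0..<t}. F x \<in> {T. \<not> chi T X}}"
      by (rule arg_cong[of _ _ "measure_pmf.prob ?P"]) auto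
    also have "\<dots> = (\<Prod>x \<in> {k} \<times> {0..<t}.
        measure_pmf.prob (pmf_of_set (Pow {i \<in> A. \<kappa> i = fst x})) {T. \<not> chi T X})"
      unfolding parity_sampler_def using k assms by (intro prob_Pi_pmf_forall) auto
    also have "\<dots> = (\<Prod>x \<in> {k} \<times> {0..<t}. 1/2)"
      using k assms by (intro prod.cong refl prob_even_inter_random_subset) auto
    finally show ?thesis by (simp add: card_cartesian_product)
  qed
  have misses_eq: "parity_misses \<kappa> A t X = (\<Union>k \<in> \<kappa> ` (X \<inter> A). ?miss k)"
    by (auto simp: parity_misses_def)
  have "measure_pmf.prob ?P (parity_misses \<kappa> A t X)
      \<le> (\<Sum>k \<in> \<kappa> ` (X \<inter> A). measure_pmf.prob ?P (?miss k))"
    unfolding misses_eq using assms by (intro measure_pmf.finite_measure_subadditive_finite) auto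
  also have "\<dots> = card (\<kappa> ` (X \<inter> A)) / 2 ^ t" using miss by (simp add: power_one_over)
  also have "\<dots> \<le> card (\<kappa> ` A) / 2 ^ t"
    using assms by (intro divide_right_mono) (auto intro: card_mono image_mono)
  finally show ?thesis .
qed

definition decode_hits :: "('k \<times> nat) list \<Rightarrow> bool list \<Rightarrow> 'k set" where
  "decode_hits idx b = {k. \<exists>s. ((k, s), True) \<in> set (zip idx b)}"

lemma decode_hits_parity_sampler:
  assumes "finite A" "set idx = \<kappa> ` A \<times> {0..<t}"
    and F: "F \<in> set_pmf (parity_sampler \<kappa> A t)" "F \<notin> parity_misses \<kappa> A t X"
  shows "decode_hits idx (map (\<lambda>x. chi (F x) X) idx) = \<kappa> ` (X \<inter> A)"
proof (intro set_eqI iffI)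
  fix k assume "k \<in> decode_hits idx (map (\<lambda>x. chi (F x) X) idx)"
  then obtain s where s: "s < t" "k \<in> \<kappa> ` A" "chi (F (k, s)) X"
    using assms(2) by (auto simp: decode_hits_def zip_same_conv_map zip_map2)
  then have "F (k, s) \<inter> X \<noteq> {}" by (auto simp: chi_def)
  moreover have "F (k, s) \<subseteq> {i \<in> A. \<kappa> i = k}" using parity_sampler_subset[OF assms(1) F(1) s(2,1)] .
  ultimately show "k \<in> \<kappa> ` (X \<inter> A)" by blast
next
  fix k assume "k \<in> \<kappa> ` (X \<inter> A)"
  then show "k \<in> decode_hits idx (map (\<lambda>x. chi (F x) X) idx)"
    using F(2) assms(2) by (auto simp: parity_misses_def decode_hits_def zip_same_conv_map zip_map2 image_iff)
qed

lemma prob_ge_if_outside_exceptional_set: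
  assumes "\<And>x. x \<in> set_pmf P \<Longrightarrow> x \<notin> B \<Longrightarrow> x \<in> E" and "measure_pmf.prob P B \<le> \<delta>"
  shows "1 - \<delta> \<le> measure_pmf.prob P E"
proof -
  have "measure_pmf.prob P (UNIV - B) \<le> measure_pmf.prob P E"
    using assms(1) by (intro measure_pmf.finite_measure_mono_AE) (auto simp: AE_measure_pmf_iff)
  moreover have "measure_pmf.prob P (UNIV - B) = 1 - measure_pmf.prob P B"
    using measure_pmf.prob_compl[of B P] by simp
  ultimately show ?thesis using assms(2) by linarith
qed

lemma sketch_exists_if_determined_by_keys:
  fixes \<kappa> :: "nat \<Rightarrow> 'k" and f :: "nat set \<Rightarrow> real"
  assumes A: "A \<subseteq> {0..<n}"
    and f: "\<And>X Y. X \<subseteq> {0..<n} \<Longrightarrow> Y \<subseteq> {0..<n} \<Longrightarrow>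
              \<kappa> ` (X \<inter> A) = \<kappa> ` (Y \<inter> A) \<Longrightarrow> f X = f Y"
    and \<delta>: "card (\<kappa> ` A) / 2 ^ t \<le> \<delta>"
  shows "sketch_exists n f \<delta> (card (\<kappa> ` A) * t)"
proof -
  have finA: "finite A" using A finite_subset by blast
  obtain ks where ks: "set ks = \<kappa> ` A" "distinct ks"
    using finite_distinct_list[of "\<kappa> ` A"] finA by blast
  define idx where "idx = List.product ks [0..<t]"
  define P where "P = parity_sampler \<kappa> A t"
  define D where "D = map_pmf (\<lambda>F. map F idx) P"
  define g where "g b = f (SOME Y. Y \<subseteq> {0..<n} \<and> \<kappa> ` (Y \<inter> A) = decode_hits idx b)" for b
  have set_idx: "set idx = \<kappa> ` A \<times> {0..<t}" using ks by (simp add: idx_def)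
  show ?thesis unfolding sketch_exists_def
  proof (intro exI[of _ D] exI[of _ g] conjI allI impI)
    show "\<forall>Ss \<in> set_pmf D. length Ss = card (\<kappa> ` A) * t \<and> (\<forall>S \<in> set Ss. S \<subseteq> {0..<n})"
    proof
      fix Ss assume "Ss \<in> set_pmf D"
      then obtain F where F: "F \<in> set_pmf P" "Ss = map F idx" by (auto simp: D_def)
      have "F x \<subseteq> {0..<n}" if "x \<in> set idx" for x
        using that A parity_sampler_subset[OF finA F(1)[unfolded P_def]] by (force simp: set_idx)
      then show "length Ss = card (\<kappa> ` A) * t \<and> (\<forall>S \<in> set Ss. S \<subseteq> {0..<n})"
        using F(2) distinct_card[OF ks(2)] ks(1) by (auto simp: idx_def)
    qed
  next
    fix X assume X: "X \<subseteq> {0..<n}"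
    have "1 - \<delta> \<le> measure_pmf.prob P {F. g (map (\<lambda>S. chi S X) (map F idx)) = f X}"
    proof (rule prob_ge_if_outside_exceptional_set)
      fix F assume F: "F \<in> set_pmf P" "F \<notin> parity_misses \<kappa> A t X"
      have hits: "decode_hits idx (map (\<lambda>S. chi S X) (map F idx)) = \<kappa> ` (X \<inter> A)"
        using decode_hits_parity_sampler[OF finA set_idx F[unfolded P_def]] by (simp add: comp_def)
      have "\<exists>Y. Y \<subseteq> {0..<n} \<and> \<kappa> ` (Y \<inter> A) = \<kappa> ` (X \<inter> A)" using X by blast
      moreover have "f Y = f X" if "Y \<subseteq> {0..<n} \<and> \<kappa> ` (Y \<inter> A) = \<kappa> ` (X \<inter> A)" for Y
        using that X by (intro f) auto
      ultimately have "g (map (\<lambda>S. chi S X) (map F idx)) = f X"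
        unfolding g_def hits by (rule someI2_ex)
      then show "F \<in> {F. g (map (\<lambda>S. chi S X) (map F idx)) = f X}" by simp
    next
      show "measure_pmf.prob P (parity_misses \<kappa> A t X) \<le> \<delta>"
        using prob_parity_misses[OF finA] \<delta> unfolding P_def by (rule order_trans)
    qed
    then show "1 - \<delta> \<le> measure_pmf.prob D {Ss. g (map (\<lambda>S. chi S X) Ss) = f X}"
      by (simp add: D_def vimage_def)
  qed
qed

lemma ceiling_log2_bounds:
  fixes y :: real
  assumes "1 \<le> y"
  shows "y \<le> 2 ^ nat \<lceil>log 2 y\<rceil>" and "real (nat \<lceil>log 2 y\<rceil>) \<le> log 2 y + 1"
proof -
  have log_nonneg: "0 \<le> log 2 y" using assms by simp
  have "y = 2 powr log 2 y" using assms by simp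
  also have "\<dots> \<le> 2 powr real (nat \<lceil>log 2 y\<rceil>)" using log_nonneg by (intro powr_mono) linarith+
  finally show "y \<le> 2 ^ nat \<lceil>log 2 y\<rceil>" by (simp add: powr_realpow)
  show "real (nat \<lceil>log 2 y\<rceil>) \<le> log 2 y + 1" using log_nonneg by linarith
qed

lemma log2_twelve_square_plus_one_le:
  fixes r :: nat
  assumes "2 \<le> r"
  shows "log 2 (12 * (real r)^2) + 1 \<le> 21/2 * ln (real r)"
proof -
  have ln2: "2/3 \<le> ln (2::real)" by (rule ln2_ge_two_thirds)
  have ln_r: "ln 2 \<le> ln (real r)" using assms by simp
  have "log 2 (12 * (real r)^2) = log 2 12 + 2 * log 2 (real r)"
    using assms by (simp add: log_mult log_nat_power)
  moreover have "log 2 12 \<le> (4::real)"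
  proof -
    have "log 2 (12::real) \<le> log 2 (2 ^ 4)" by simp
    also have "\<dots> = 4" by (subst log_nat_power) auto
    finally show ?thesis .
  qed
  moreover have "log 2 (real r) \<le> 3/2 * ln (real r)"
  proof -
    have "log 2 (real r) = ln (real r) / ln 2" by (simp add: log_def)
    also have "\<dots> \<le> ln (real r) / (2/3)" using ln2 ln_r by (intro divide_left_mono) auto
    finally show ?thesis by simp
  qed
  ultimately show ?thesis using ln2 ln_r by linarith
qed

theorem mainTheorem5:
  shows "\<exists>C::real. \<forall>(r::nat) (n::nat) (G::multigraph).
           r \<ge> 2 \<longrightarrow> matroid_rank n G = r \<longrightarrow>
           real (R_lin n (\<lambda>X. real (graphic_rank n G X)) (1/3)) \<le> C * (real r)^2 * ln (real r)"
proof (intro exI[of _ 42] allI impI)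
  fix r n :: nat and G :: multigraph
  assume r: "2 \<le> r" and rank: "matroid_rank n G = r"
  define K where "K = edge_key G ` proper_edges n G"
  define t where "t = nat \<lceil>log 2 (12 * (real r)^2)\<rceil>"
  have "card K \<le> 4 * r^2" using card_edge_keys_le[of G n] rank unfolding K_def by simp
  then have card_K: "real (card K) \<le> 4 * (real r)^2"
    by (metis of_nat_le_iff of_nat_mult of_nat_numeral of_nat_power)
  have "1 \<le> (real r)^2" using r by (intro one_le_power) simp
  then have one_le: "1 \<le> 12 * (real r)^2" by simp
  have two_pow_t: "12 * (real r)^2 \<le> 2 ^ t"
    unfolding t_def by (rule ceiling_log2_bounds(1)[OF one_le])
  have t: "real t \<le> 21/2 * ln (real r)"
    using ceiling_log2_bounds(2)[OF one_le] log2_twelve_square_plus_one_le[OF r]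
    unfolding t_def by linarith
  have "sketch_exists n (\<lambda>X. real (graphic_rank n G X)) (1/3) (card K * t)"
    unfolding K_def
  proof (rule sketch_exists_if_determined_by_keys)
    show "proper_edges n G \<subseteq> {0..<n}" by (auto simp: proper_edges_def)
    show "real (graphic_rank n G X) = real (graphic_rank n G Y)"
      if "X \<subseteq> {0..<n}" "Y \<subseteq> {0..<n}"
        "edge_key G ` (X \<inter> proper_edges n G) = edge_key G ` (Y \<inter> proper_edges n G)" for X Y
      using graphic_rank_eq_if_same_keys[OF that] by simp
    show "real (card (edge_key G ` proper_edges n G)) / 2 ^ t \<le> 1/3"
      using card_K two_pow_t unfolding K_def by (simp add: field_simps)
  qed
  then have "R_lin n (\<lambda>X. real (graphic_rank n G X)) (1/3) \<le> card K * t"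
    unfolding R_lin_def by (rule Least_le)
  then have "real (R_lin n (\<lambda>X. real (graphic_rank n G X)) (1/3)) \<le> real (card K) * real t"
    by (simp flip: of_nat_mult)
  also have "\<dots> \<le> 4 * (real r)^2 * (21/2 * ln (real r))"
    using card_K t by (intro mult_mono) auto
  also have "\<dots> = 42 * (real r)^2 * ln (real r)" by simp
  finally show "real (R_lin n (\<lambda>X. real (graphic_rank n G X)) (1/3)) \<le> 42 * (real r)^2 * ln (real r)" .
qed

end
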